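(* Let $\mathbf p$ be a pinned configuration in $\mathbb R^d$ with $\ell$-dimensional affine span, and let $k\ge1$. If an analytic trajectory $\mathbf p(t)$ with $\mathbf p(0)=\mathbf p$ is in $\ell$-pinned position for all $t$ and is $k$-trivial, then it is $k$-vanishing.
   Context: A configuration $\mathbf q=(\mathbf q_1,\dots,\mathbf q_n)$, $\mathbf q_i\in\mathbb R^d$, is in $\ell$-pinned position if $\mathbf q_1=0$ and, for $2\le i\le\ell+1$, $\mathbf q_i\in\mathrm{span}(e_1,\dots,e_{i-1})$. A configuration $\mathbf p$ with $\ell$-dimensional affine span is pinned if $\mathbf p_1,\dots,\mathbf p_{\ell+1}$ are affinely independent and $\mathbf p$ is in $\ell$-pinned position. An analytic trajectory of isometries is a family $T(t)\mathbf x=A(t)\mathbf x+\mathbf b(t)$ with $A(t)$ orthogonal and $A,\mathbf b$ analytic in $t$. An analytic trajectory $\mathbf p(t)$ is $k$-trivial if it agrees through $k$-th order in $t$ (equal Taylor coefficients of orders $0,\dots,k$ at $t=0$) with $T(t)\mathbf p(0)$ for some analytic trajectory of isometries $T(t)$ with $T(0)=I$. A $C^k$ vector function $\varphi(t)$ is $k$-vanishing if $\varphi^{(i)}(0)=0$ for $1\le i\le k$. *)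

theory Defs
  imports "HOL-Analysis.Analysis"
begin

text \<open>Points of a configuration are indexed by 1..n. Euclidean space R^d is
  the type real^'d; the ordered standard basis e_1,...,e_d is given by a bijection
  idx : {1..CARD('d)} -> 'd, e_m = axis (idx m) 1.\<close>

definition std_basis :: "(nat \<Rightarrow> 'd::finite) \<Rightarrow> nat \<Rightarrow> real ^ 'd" where
  "std_basis idx m = axis (idx m) 1"

definition analytic_on_radius :: "real \<Rightarrow> (real \<Rightarrow> real) \<Rightarrow> bool" where
  "analytic_on_radius r f \<longleftrightarrow> (\<exists>c::nat \<Rightarrow> real. \<forall>t. \<bar>t\<bar> < r \<longrightarrow> (\<lambda>m. c m * t ^ m) sums f t)"

definition pinned_position ::
  "(nat \<Rightarrow> 'd::finite) \<Rightarrow> nat \<Rightarrow> (nat \<Rightarrow> real ^ 'd) \<Rightarrow> bool" where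
  "pinned_position idx l q \<longleftrightarrow>
     q 1 = 0 \<and> (\<forall>i\<in>{2..l+1}. q i \<in> span (std_basis idx ` {1..i-1}))"

definition pinned_config ::
  "(nat \<Rightarrow> 'd::finite) \<Rightarrow> nat \<Rightarrow> nat \<Rightarrow> (nat \<Rightarrow> real ^ 'd) \<Rightarrow> bool" where
  "pinned_config idx n l p \<longleftrightarrow>
     l + 1 \<le> n \<and> aff_dim (p ` {1..n}) = int l \<and>
     inj_on p {1..l+1} \<and> \<not> affine_dependent (p ` {1..l+1}) \<and>
     pinned_position idx l p"

definition analytic_traj ::
  "real \<Rightarrow> nat \<Rightarrow> (real \<Rightarrow> nat \<Rightarrow> real ^ 'd::finite) \<Rightarrow> bool" where
  "analytic_traj r n P \<longleftrightarrow> r > 0 \<and>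
     (\<forall>i\<in>{1..n}. \<forall>j. analytic_on_radius r (\<lambda>t. P t i $ j))"

definition analytic_isom_traj ::
  "real \<Rightarrow> (real \<Rightarrow> real ^ 'd ^ 'd::finite) \<Rightarrow> (real \<Rightarrow> real ^ 'd) \<Rightarrow> bool" where
  "analytic_isom_traj r A b \<longleftrightarrow> r > 0 \<and>
     (\<forall>i j. analytic_on_radius r (\<lambda>t. A t $ i $ j)) \<and>
     (\<forall>j. analytic_on_radius r (\<lambda>t. b t $ j)) \<and>
     (\<forall>t. \<bar>t\<bar> < r \<longrightarrow> orthogonal_matrix (A t))"

definition taylor_coeff :: "nat \<Rightarrow> (real \<Rightarrow> real) \<Rightarrow> real" where
  "taylor_coeff i f = (deriv ^^ i) f 0 / fact i"

definition k_trivial ::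
  "nat \<Rightarrow> nat \<Rightarrow> (real \<Rightarrow> nat \<Rightarrow> real ^ 'd::finite) \<Rightarrow> bool" where
  "k_trivial k n P \<longleftrightarrow>
     (\<exists>r A b. analytic_isom_traj r A b \<and> A 0 = mat 1 \<and> b 0 = 0 \<and>
        (\<forall>i\<le>k. \<forall>m\<in>{1..n}. \<forall>j.
            taylor_coeff i (\<lambda>t. P t m $ j) = taylor_coeff i (\<lambda>t. (A t *v P 0 m + b t) $ j)))"

definition k_vanishing ::
  "nat \<Rightarrow> nat \<Rightarrow> (real \<Rightarrow> nat \<Rightarrow> real ^ 'd::finite) \<Rightarrow> bool" where
  "k_vanishing k n P \<longleftrightarrow>
     (\<forall>i\<in>{1..k}. \<forall>m\<in>{1..n}. \<forall>j. (deriv ^^ i) (\<lambda>t. P t m $ j) 0 = 0)"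

end

theory Submission
  imports Defs
begin

text \<open>
  Write the isometries as x \<mapsto> A(t) x + b(t) with A(t) = \<Sum> M_j t^j and M_0 = I. For j \<le> k the
  j-th Taylor coefficient of p_m(t) is M_j p_m + b_j. Since p_1(t) = 0, all b_j vanish; since
  p_i(t) stays in span(e_1, ..., e_{i-1}), so does M_j p_i, and as p_2, ..., p_{l+1} span the same
  flag as e_1, ..., e_l, each M_j is upper triangular on W = span(e_1, ..., e_l). Orthogonality of
  A(t) gives \<Sum>_{u \<le> j} M_u^T M_{j-u} = 0 for j \<ge> 1; once the lower coefficients vanish on W,
  this says that M_j is skew on W. Skew and upper triangular forces M_j = 0 on W, so by induction
  M_1, ..., M_k vanish on W, which contains the whole configuration.\<close>

section \<open>Real power series on a symmetric interval\<close>

definition has_powser_on :: "real \<Rightarrow> (nat \<Rightarrow> real) \<Rightarrow> (real \<Rightarrow> real) \<Rightarrow> bool" where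
  "has_powser_on r c f \<longleftrightarrow> (\<forall>t. \<bar>t\<bar> < r \<longrightarrow> (\<lambda>m. c m * t ^ m) sums f t)"

lemma has_powser_on_deriv:
  assumes "has_powser_on r c f"
  shows "has_powser_on r (diffs c) (deriv f)"
  unfolding has_powser_on_def
proof (intro allI impI)
  fix t :: real assume t: "\<bar>t\<bar> < r"
  have summable: "\<And>z. norm z < r \<Longrightarrow> summable (\<lambda>n. c n * z ^ n)"
    using assms unfolding has_powser_on_def by (auto intro: sums_summable)
  have "((\<lambda>z. \<Sum>n. c n * z ^ n) has_field_derivative (\<Sum>n. diffs c n * t ^ n)) (at t)"
    by (rule termdiffs_strong') (use summable t in auto)
  then have "(f has_field_derivative (\<Sum>n. diffs c n * t ^ n)) (at t)"
  proof (rule has_field_derivative_transform_within_open[of _ _ _ "{-r<..<r}"])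
    show "(\<Sum>n. c n * x ^ n) = f x" if "x \<in> {-r<..<r}" for x
      using assms that unfolding has_powser_on_def by (auto simp: sums_iff abs_less_iff)
  qed (use t in auto)
  moreover have "summable (\<lambda>n. diffs c n * t ^ n)"
    by (rule termdiff_converges[of t r]) (use summable t in auto)
  ultimately show "(\<lambda>m. diffs c m * t ^ m) sums deriv f t"
    by (simp add: DERIV_imp_deriv summable_sums)
qed

lemma higher_deriv_0_has_powser_on:
  assumes "has_powser_on r c f" and "r > 0"
  shows "(deriv ^^ i) f 0 = fact i * c i"
  using assms(1)
proof (induction i arbitrary: c f)
  case 0
  then show ?case
    using assms(2) unfolding has_powser_on_def by (metis abs_0 fact_0 funpow_0 mult_1 powser_sums_zero_iff)
next
  case (Suc i)
  have "(deriv ^^ Suc i) f 0 = (deriv ^^ i) (deriv f) 0"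
    by (simp add: funpow_Suc_right del: funpow.simps)
  also have "\<dots> = fact i * diffs c i"
    using Suc.IH[OF has_powser_on_deriv[OF Suc.prems]] .
  also have "\<dots> = fact (Suc i) * c (Suc i)"
    by (simp add: diffs_def)
  finally show ?case .
qed

lemma taylor_coeff_has_powser_on:
  "has_powser_on r c f \<Longrightarrow> r > 0 \<Longrightarrow> taylor_coeff i f = c i"
  unfolding taylor_coeff_def by (simp add: higher_deriv_0_has_powser_on)

lemma has_powser_on_taylor_coeff:
  assumes "analytic_on_radius r f" and "r > 0"
  shows "has_powser_on r (\<lambda>i. taylor_coeff i f) f"
proof -
  obtain c where c: "has_powser_on r c f"
    using assms(1) unfolding analytic_on_radius_def has_powser_on_def by blast
  moreover have "(\<lambda>i. taylor_coeff i f) = c"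
    using taylor_coeff_has_powser_on[OF c assms(2)] by blast
  ultimately show ?thesis by simp
qed

lemma has_powser_on_cong:
  "has_powser_on r c f \<Longrightarrow> (\<And>t. \<bar>t\<bar> < r \<Longrightarrow> f t = g t) \<Longrightarrow> has_powser_on r c g"
  unfolding has_powser_on_def by auto

lemma has_powser_on_const: "has_powser_on r (\<lambda>m. if m = 0 then a else 0) (\<lambda>_. a)"
proof -
  have "(\<lambda>m. (if m = 0 then a else 0) * t ^ m) = (\<lambda>m. if m = 0 then a else 0)" for t :: real
    by auto
  then show ?thesis
    unfolding has_powser_on_def using sums_single[of 0 "\<lambda>_. a"] by simp
qed

lemma has_powser_on_add:
  "has_powser_on r c f \<Longrightarrow> has_powser_on r d g \<Longrightarrow> has_powser_on r (\<lambda>m. c m + d m) (\<lambda>t. f t + g t)"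
  unfolding has_powser_on_def by (auto simp: distrib_right intro: sums_add)

lemma has_powser_on_cmult:
  "has_powser_on r c f \<Longrightarrow> has_powser_on r (\<lambda>m. a * c m) (\<lambda>t. a * f t)"
  unfolding has_powser_on_def by (auto simp: mult.assoc intro: sums_mult)

lemma has_powser_on_sum:
  "(\<And>x. x \<in> S \<Longrightarrow> has_powser_on r (c x) (f x)) \<Longrightarrow>
   has_powser_on r (\<lambda>m. \<Sum>x\<in>S. c x m) (\<lambda>t. \<Sum>x\<in>S. f x t)"
  unfolding has_powser_on_def by (cases "finite S") (auto simp: sum_distrib_right intro!: sums_sum)

lemma has_powser_on_mult:
  assumes "has_powser_on r a f" and "has_powser_on r b g"
  shows "has_powser_on r (\<lambda>k. \<Sum>i\<le>k. a i * b (k - i)) (\<lambda>t. f t * g t)"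
  unfolding has_powser_on_def
proof (intro allI impI)
  fix t :: real assume t: "\<bar>t\<bar> < r"
  define K where "K = (\<bar>t\<bar> + r) / 2"
  have K: "\<bar>t\<bar> < K" "\<bar>K\<bar> < r"
    using t by (auto simp: K_def)
  have "summable (\<lambda>n. norm (a n * t ^ n))"
    by (rule powser_insidea[of _ K]) (use assms(1) K in \<open>auto simp: has_powser_on_def sums_iff\<close>)
  moreover have "summable (\<lambda>n. norm (b n * t ^ n))"
    by (rule powser_insidea[of _ K]) (use assms(2) K in \<open>auto simp: has_powser_on_def sums_iff\<close>)
  ultimately have "(\<lambda>k. \<Sum>i\<le>k. (a i * t ^ i) * (b (k - i) * t ^ (k - i))) sums
      ((\<Sum>k. a k * t ^ k) * (\<Sum>k. b k * t ^ k))"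
    by (rule Cauchy_product_sums)
  moreover have "(\<Sum>k. a k * t ^ k) = f t" "(\<Sum>k. b k * t ^ k) = g t"
    using assms t by (auto simp: has_powser_on_def sums_iff)
  moreover have "(\<Sum>i\<le>k. (a i * t ^ i) * (b (k - i) * t ^ (k - i))) = (\<Sum>i\<le>k. a i * b (k - i)) * t ^ k"
    for k
    unfolding sum_distrib_right
    by (intro sum.cong refl) (simp add: mult_ac flip: power_add)
  ultimately show "(\<lambda>k. (\<Sum>i\<le>k. a i * b (k - i)) * t ^ k) sums (f t * g t)"
    by simp
qed

section \<open>Taylor coefficients of vector and matrix trajectories\<close>

definition taylor_coeff_vec :: "nat \<Rightarrow> (real \<Rightarrow> real ^ 'n) \<Rightarrow> real ^ 'n" where
  "taylor_coeff_vec i X = (\<chi> j. taylor_coeff i (\<lambda>t. X t $ j))"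

definition taylor_coeff_mat :: "nat \<Rightarrow> (real \<Rightarrow> real ^ 'n ^ 'm) \<Rightarrow> real ^ 'n ^ 'm" where
  "taylor_coeff_mat i A = (\<chi> a c. taylor_coeff i (\<lambda>t. A t $ a $ c))"

lemma taylor_coeff_mat_0: "taylor_coeff_mat 0 A = A 0"
  by (simp add: taylor_coeff_mat_def taylor_coeff_def vec_eq_iff)

lemma has_powser_on_inner_taylor_coeff_vec:
  assumes "r > 0" and "\<And>j. analytic_on_radius r (\<lambda>t. X t $ j)"
  shows "has_powser_on r (\<lambda>i. y \<bullet> taylor_coeff_vec i X) (\<lambda>t. y \<bullet> X t)"
  unfolding inner_vec_def inner_real_def taylor_coeff_vec_def
  by (auto intro!: has_powser_on_sum has_powser_on_cmult has_powser_on_taylor_coeff assms)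

lemma has_powser_on_matrix_vector_mult:
  assumes "r > 0" and "\<And>a c. analytic_on_radius r (\<lambda>t. A t $ a $ c)"
  shows "has_powser_on r (\<lambda>i. (taylor_coeff_mat i A *v w) $ a) (\<lambda>t. (A t *v w) $ a)"
proof -
  have "has_powser_on r (\<lambda>i. \<Sum>c\<in>UNIV. w $ c * taylor_coeff i (\<lambda>t. A t $ a $ c))
      (\<lambda>t. \<Sum>c\<in>UNIV. w $ c * A t $ a $ c)"
    by (intro has_powser_on_sum has_powser_on_cmult has_powser_on_taylor_coeff assms)
  then show ?thesis
    by (simp add: matrix_vector_mult_def taylor_coeff_mat_def mult.commute)
qed

lemma taylor_coeff_vec_affine:
  assumes "r > 0" and "\<And>a c. analytic_on_radius r (\<lambda>t. A t $ a $ c)"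
    and "\<And>j. analytic_on_radius r (\<lambda>t. b t $ j)"
  shows "taylor_coeff_vec i (\<lambda>t. A t *v w + b t) = taylor_coeff_mat i A *v w + taylor_coeff_vec i b"
proof -
  have "has_powser_on r (\<lambda>i. (taylor_coeff_mat i A *v w) $ j + taylor_coeff i (\<lambda>t. b t $ j))
      (\<lambda>t. (A t *v w + b t) $ j)" for j
    by (simp, intro has_powser_on_add has_powser_on_matrix_vector_mult has_powser_on_taylor_coeff assms)
  from taylor_coeff_has_powser_on[OF this assms(1)] show ?thesis
    by (simp add: vec_eq_iff taylor_coeff_vec_def)
qed

lemma taylor_coeff_vec_in_subspace:
  fixes X :: "real \<Rightarrow> real ^ 'n"
  assumes "r > 0" and analytic: "\<And>j. analytic_on_radius r (\<lambda>t. X t $ j)"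
    and "subspace S" and "\<And>t. \<bar>t\<bar> < r \<Longrightarrow> X t \<in> S"
  shows "taylor_coeff_vec i X \<in> S"
proof -
  have span_S: "span S = S"
    using \<open>subspace S\<close> by simp
  txt \<open>The component \<open>z\<close> orthogonal to \<open>S\<close> annihilates \<open>X t\<close> identically, hence also the
    coefficient; so \<open>z = 0\<close>.\<close>
  obtain y z where "y \<in> S" and z_orth: "\<And>w. w \<in> S \<Longrightarrow> orthogonal z w"
    and decomp: "taylor_coeff_vec i X = y + z"
    using orthogonal_subspace_decomp_exists[of S "taylor_coeff_vec i X"] unfolding span_S by metis
  have "has_powser_on r (\<lambda>m. if m = 0 then 0 else 0) (\<lambda>t. z \<bullet> X t)"
    using has_powser_on_const[of r 0]
    by (rule has_powser_on_cong) (simp add: assms(4) z_orth[unfolded orthogonal_def])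
  from taylor_coeff_has_powser_on[OF this assms(1)]
    taylor_coeff_has_powser_on[OF has_powser_on_inner_taylor_coeff_vec[OF assms(1) analytic] assms(1)]
  have "z \<bullet> taylor_coeff_vec i X = 0"
    by simp
  then have "z = 0"
    using z_orth[OF \<open>y \<in> S\<close>] by (simp add: decomp inner_add_right orthogonal_def)
  then show ?thesis
    using \<open>y \<in> S\<close> decomp by simp
qed

lemma orthogonal_matrix_inner: "orthogonal_matrix (A :: real ^ 'n ^ 'n) \<Longrightarrow> (A *v w) \<bullet> (A *v v) = w \<bullet> v"
  by (metis dot_matrix_product dot_matrix_vector_mul matrix_mul_lid orthogonal_matrix_def)

lemma taylor_coeff_mat_orthogonal:
  fixes A :: "real \<Rightarrow> real ^ 'n ^ 'n"
  assumes "r > 0" and analytic: "\<And>a c. analytic_on_radius r (\<lambda>t. A t $ a $ c)"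
    and orth: "\<And>t. \<bar>t\<bar> < r \<Longrightarrow> orthogonal_matrix (A t)" and "j \<noteq> 0"
  shows "(\<Sum>u\<le>j. (taylor_coeff_mat u A *v w) \<bullet> (taylor_coeff_mat (j - u) A *v v)) = 0"
proof -
  let ?M = "\<lambda>u. taylor_coeff_mat u A"
  have "has_powser_on r (\<lambda>k. \<Sum>a\<in>UNIV. \<Sum>u\<le>k. (?M u *v w) $ a * (?M (k - u) *v v) $ a)
      (\<lambda>t. \<Sum>a\<in>UNIV. (A t *v w) $ a * (A t *v v) $ a)"
    by (intro has_powser_on_sum has_powser_on_mult has_powser_on_matrix_vector_mult assms)
  then have "has_powser_on r (\<lambda>k. \<Sum>a\<in>UNIV. \<Sum>u\<le>k. (?M u *v w) $ a * (?M (k - u) *v v) $ a)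
      (\<lambda>_. w \<bullet> v)"
  proof (rule has_powser_on_cong)
    fix t :: real assume "\<bar>t\<bar> < r"
    then have "(A t *v w) \<bullet> (A t *v v) = w \<bullet> v"
      by (simp add: orth orthogonal_matrix_inner)
    then show "(\<Sum>a\<in>UNIV. (A t *v w) $ a * (A t *v v) $ a) = w \<bullet> v"
      by (simp add: inner_vec_def)
  qed
  from taylor_coeff_has_powser_on[OF this assms(1)]
  have "(\<Sum>a\<in>UNIV. \<Sum>u\<le>j. (?M u *v w) $ a * (?M (j - u) *v v) $ a) = taylor_coeff j (\<lambda>_. w \<bullet> v)"
    by simp
  also have "\<dots> = 0"
    using taylor_coeff_has_powser_on[OF has_powser_on_const assms(1)] \<open>j \<noteq> 0\<close> by simp
  finally show ?thesis
    unfolding inner_vec_def inner_real_def by (subst sum.swap) simp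
qed

section \<open>Skew upper triangular maps\<close>

lemma skew_upper_triangular_eq_0:
  fixes f :: "'a::real_inner \<Rightarrow> 'a" and e :: "nat \<Rightarrow> 'a"
  assumes orth: "\<And>a b. a \<in> {1..l} \<Longrightarrow> b \<in> {1..l} \<Longrightarrow> a \<noteq> b \<Longrightarrow> orthogonal (e a) (e b)"
    and upper: "\<And>a. a \<in> {1..l} \<Longrightarrow> f (e a) \<in> span (e ` {1..a})"
    and skew: "\<And>a b. a \<in> {1..l} \<Longrightarrow> b \<in> {1..l} \<Longrightarrow> e b \<bullet> f (e a) + f (e b) \<bullet> e a = 0"
    and a: "a \<in> {1..l}"
  shows "f (e a) = 0"
proof -
  have below: "e b \<bullet> f (e a) = 0" if "a \<in> {1..l}" "b \<in> {1..l}" "a < b" for a b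
  proof -
    have "orthogonal (e b) (f (e a))"
      by (rule orthogonal_to_span[OF upper[OF \<open>a \<in> {1..l}\<close>]]) (use orth that in auto)
    then show ?thesis
      by (simp add: orthogonal_def)
  qed
  have "orthogonal (f (e a)) (e b)" if b: "b \<in> {1..l}" for b
  proof (cases a b rule: linorder_cases)
    case less
    then show ?thesis using below[OF a b] by (simp add: orthogonal_def inner_commute)
  next
    case equal
    then show ?thesis using skew[OF a a] by (simp add: orthogonal_def inner_commute)
  next
    case greater
    then show ?thesis using skew[OF a b] below[OF b a] by (simp add: orthogonal_def inner_commute)
  qed
  moreover have "f (e a) \<in> span (e ` {1..l})"
  proof -
    have "span (e ` {1..a}) \<subseteq> span (e ` {1..l})"
      using a by (intro span_mono image_mono) auto
    then show ?thesis
      using upper[OF a] by auto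
  qed
  ultimately have "orthogonal (f (e a)) (f (e a))"
    by (auto intro: orthogonal_to_span)
  then show ?thesis
    by (simp add: orthogonal_def)
qed

lemma orthogonal_series_triangular_coeffs_vanish:
  fixes M :: "nat \<Rightarrow> real ^ 'n ^ 'n" and e :: "nat \<Rightarrow> real ^ 'n"
  assumes M0: "M 0 = mat 1"
    and orth_series: "\<And>j v w. j \<noteq> 0 \<Longrightarrow> (\<Sum>u\<le>j. (M u *v w) \<bullet> (M (j - u) *v v)) = 0"
    and orth: "\<And>a b. a \<in> {1..l} \<Longrightarrow> b \<in> {1..l} \<Longrightarrow> a \<noteq> b \<Longrightarrow> orthogonal (e a) (e b)"
    and upper: "\<And>j a. j \<in> {1..k} \<Longrightarrow> a \<in> {1..l} \<Longrightarrow> M j *v e a \<in> span (e ` {1..a})"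
  shows "j \<in> {1..k} \<Longrightarrow> w \<in> span (e ` {1..l}) \<Longrightarrow> M j *v w = 0"
proof (induction j arbitrary: w rule: less_induct)
  case (less j)
  have skew: "e b \<bullet> (M j *v e a) + (M j *v e b) \<bullet> e a = 0" if "a \<in> {1..l}" "b \<in> {1..l}" for a b
  proof -
    txt \<open>By the induction hypothesis only the terms \<open>u = 0\<close> and \<open>u = j\<close> survive.\<close>
    let ?term = "\<lambda>u. (M u *v e b) \<bullet> (M (j - u) *v e a)"
    have "(\<Sum>u\<le>j. ?term u) = (\<Sum>u\<in>{0, j}. ?term u)"
    proof (rule sum.mono_neutral_right)
      show "\<forall>u\<in>{..j} - {0, j}. ?term u = 0"
        using less that by (auto simp: span_base)
    qed auto
    then show ?thesis
      using orth_series[where v = "e a" and w = "e b"] less.prems M0 by simp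
  qed
  have "M j *v e a = 0" if "a \<in> {1..l}" for a
    by (rule skew_upper_triangular_eq_0[where f = "(*v) (M j)" and l = l])
      (use orth upper less.prems skew that in auto)
  then show ?case
    using real_vector.linear_eq_0_on_span[OF matrix_vector_mul_linear] less.prems by blast
qed

lemma triangular_family_spans_basis:
  fixes p e :: "nat \<Rightarrow> 'a::euclidean_space"
  assumes indep: "independent (p ` {2..l+1})" and inj: "inj_on p {2..l+1}"
    and p_span: "\<And>i. i \<in> {2..l+1} \<Longrightarrow> p i \<in> span (e ` {1..i-1})"
    and a: "a \<in> {1..l}"
  shows "e a \<in> span (p ` {2..a+1})"
proof -
  have "p ` {2..a+1} \<subseteq> span (e ` {1..a})"
  proof
    fix x assume "x \<in> p ` {2..a+1}"
    then obtain i where i: "i \<in> {2..a+1}" "x = p i" by auto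
    have "p i \<in> span (e ` {1..i-1})" using p_span i a by auto
    also have "\<dots> \<subseteq> span (e ` {1..a})" using i by (intro span_mono image_mono) auto
    finally show "x \<in> span (e ` {1..a})" using i by simp
  qed
  moreover have "independent (p ` {2..a+1})"
    using indep by (rule independent_mono) (use a in auto)
  moreover have "dim (span (e ` {1..a})) \<le> card (p ` {2..a+1})"
  proof -
    have "dim (span (e ` {1..a})) \<le> card (e ` {1..a})"
      by (rule dim_le_card) auto
    also have "\<dots> \<le> a"
      using card_image_le[of "{1..a}" e] by simp
    also have "\<dots> = card (p ` {2..a+1})"
      using card_image[OF inj_on_subset[OF inj, of "{2..a+1}"]] a by simp
    finally show ?thesis .
  qed
  ultimately have "span (e ` {1..a}) \<subseteq> span (p ` {2..a+1})"
    by (rule card_ge_dim_independent)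
  moreover have "e a \<in> span (e ` {1..a})"
    using a by (intro span_base) auto
  ultimately show ?thesis
    by auto
qed

lemma linear_upper_triangular_on_basis:
  fixes p e :: "nat \<Rightarrow> 'a::euclidean_space"
  assumes "linear f" and "independent (p ` {2..l+1})" and "inj_on p {2..l+1}"
    and "\<And>i. i \<in> {2..l+1} \<Longrightarrow> p i \<in> span (e ` {1..i-1})"
    and f_span: "\<And>i. i \<in> {2..l+1} \<Longrightarrow> f (p i) \<in> span (e ` {1..i-1})"
    and a: "a \<in> {1..l}"
  shows "f (e a) \<in> span (e ` {1..a})"
proof -
  have "p ` {2..a+1} \<subseteq> {x. f x \<in> span (e ` {1..a})}"
  proof
    fix x assume "x \<in> p ` {2..a+1}"
    then obtain i where i: "i \<in> {2..a+1}" "x = p i" by auto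
    have "f (p i) \<in> span (e ` {1..i-1})" using f_span i a by auto
    also have "\<dots> \<subseteq> span (e ` {1..a})" using i by (intro span_mono image_mono) auto
    finally show "x \<in> {x. f x \<in> span (e ` {1..a})}" using i by simp
  qed
  then have "span (p ` {2..a+1}) \<subseteq> {x. f x \<in> span (e ` {1..a})}"
    by (intro span_minimal real_vector.linear_subspace_linear_preimage \<open>linear f\<close> subspace_span)
  then show ?thesis
    using triangular_family_spans_basis[OF assms(2-4) a] by auto
qed

section \<open>Pinned configurations\<close>

lemma orthogonal_std_basis:
  assumes "inj_on idx {1..CARD('d)}" and "a \<in> {1..CARD('d)}" "b \<in> {1..CARD('d)}" "a \<noteq> b"
  shows "orthogonal (std_basis idx a :: real ^ 'd) (std_basis idx b)"
  using assms by (simp add: std_basis_def orthogonal_def inner_axis_axis inj_on_eq_iff)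

lemma pinned_config_le_card:
  fixes p :: "nat \<Rightarrow> real ^ 'd"
  assumes "pinned_config idx n l p"
  shows "l \<le> CARD('d)"
  using assms aff_dim_le_DIM[of "p ` {1..n}"] by (simp add: pinned_config_def)

lemma pinned_config_independent:
  assumes "pinned_config idx n l p"
  shows "independent (p ` {2..l+1})"
proof -
  have p1: "p 1 = 0" and inj: "inj_on p {1..l+1}" and indep: "\<not> affine_dependent (p ` {1..l+1})"
    using assms by (auto simp: pinned_config_def pinned_position_def)
  have "{1..l+1} = insert 1 {2..l+1}"
    by auto
  then have "p ` {1..l+1} = insert (p 1) (p ` {2..l+1})"
    by simp
  moreover have "p 1 \<notin> p ` {2..l+1}"
    using inj_on_image_mem_iff[OF inj, of 1 "{2..l+1}"] by auto
  ultimately show ?thesis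
    using indep affine_dependent_iff_dependent[of "p 1" "p ` {2..l+1}"] p1 by simp
qed

lemma pinned_config_in_span:
  assumes "pinned_config idx n l p" and m: "m \<in> {1..n}"
  shows "p m \<in> span (std_basis idx ` {1..l})"
proof -
  have ln: "l + 1 \<le> n" and aff_dim: "aff_dim (p ` {1..n}) = int l" and inj: "inj_on p {1..l+1}"
    and indep: "\<not> affine_dependent (p ` {1..l+1})" and p1: "p 1 = 0"
    and p_span: "\<And>i. i \<in> {2..l+1} \<Longrightarrow> p i \<in> span (std_basis idx ` {1..i-1})"
    using assms(1) by (auto simp: pinned_config_def pinned_position_def)
  have aff_dim_frame: "aff_dim (p ` {1..l+1}) = int l"
    using aff_dim_affine_independent[OF indep] card_image[OF inj] by simp
  have "affine hull (p ` {1..l+1}) = affine hull (p ` {1..n})"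
  proof (rule affine_dim_equal[OF affine_affine_hull affine_affine_hull])
    show "affine hull (p ` {1..l+1}) \<subseteq> affine hull (p ` {1..n})"
      using ln by (intro hull_mono image_mono) auto
  qed (use aff_dim aff_dim_frame in \<open>auto simp: aff_dim_affine_hull\<close>)
  moreover have "affine hull (p ` {1..l+1}) = span (p ` {1..l+1})"
    using hull_inc[of "p 1" "p ` {1..l+1}" affine] p1 by (intro affine_hull_span_0) auto
  moreover have "p ` {1..l+1} \<subseteq> span (std_basis idx ` {1..l})"
  proof
    fix x assume "x \<in> p ` {1..l+1}"
    then obtain i where i: "i \<in> {1..l+1}" "x = p i" by auto
    show "x \<in> span (std_basis idx ` {1..l})"
    proof (cases "i = 1")
      case True
      then show ?thesis using i p1 by (simp add: span_zero)
    next
      case False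
      then have "i \<in> {2..l+1}" using i by auto
      then have "p i \<in> span (std_basis idx ` {1..i-1})" by (rule p_span)
      also have "\<dots> \<subseteq> span (std_basis idx ` {1..l})" using i by (intro span_mono image_mono) auto
      finally show ?thesis using i by simp
    qed
  qed
  then have "span (p ` {1..l+1}) \<subseteq> span (std_basis idx ` {1..l})"
    by (intro span_minimal subspace_span)
  moreover have "p m \<in> affine hull (p ` {1..n})"
    using m by (intro hull_inc) auto
  ultimately show ?thesis
    by auto
qed

lemma pinned_config_linear_upper_triangular:
  assumes "pinned_config idx n l p" and "linear f" and "pinned_position idx l (\<lambda>m. f (p m))"
    and "a \<in> {1..l}"
  shows "f (std_basis idx a) \<in> span (std_basis idx ` {1..a})"
proof (rule linear_upper_triangular_on_basis[OF \<open>linear f\<close> pinned_config_independent[OF assms(1)]])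
  show "inj_on p {2..l+1}" "\<And>i. i \<in> {2..l+1} \<Longrightarrow> p i \<in> span (std_basis idx ` {1..i-1})"
    using assms(1) by (auto simp: pinned_config_def pinned_position_def intro: inj_on_subset)
qed (use assms(3,4) in \<open>auto simp: pinned_position_def\<close>)

lemma pinned_position_taylor_coeff_vec:
  assumes "analytic_traj r n P" and "l + 1 \<le> n"
    and "\<forall>t. \<bar>t\<bar> < r \<longrightarrow> pinned_position idx l (P t)"
  shows "pinned_position idx l (\<lambda>m. taylor_coeff_vec i (\<lambda>t. P t m))"
proof -
  have coeff_in: "taylor_coeff_vec i (\<lambda>t. P t m) \<in> S"
    if "m \<in> {1..n}" "subspace S" "\<And>t. \<bar>t\<bar> < r \<Longrightarrow> P t m \<in> S" for m S
    using assms(1) that by (intro taylor_coeff_vec_in_subspace[of r]) (auto simp: analytic_traj_def)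
  have "taylor_coeff_vec i (\<lambda>t. P t 1) \<in> {0}"
    using assms by (intro coeff_in subspace_single_0) (auto simp: pinned_position_def)
  moreover have "taylor_coeff_vec i (\<lambda>t. P t m) \<in> span (std_basis idx ` {1..m-1})" if "m \<in> {2..l+1}" for m
    using assms that by (intro coeff_in subspace_span) (auto simp: pinned_position_def)
  ultimately show ?thesis
    by (simp add: pinned_position_def)
qed

lemma k_trivialE:
  fixes P :: "real \<Rightarrow> nat \<Rightarrow> real ^ 'd"
  assumes "k_trivial k n P"
  obtains M \<beta>
  where "M 0 = mat 1"
    and "\<And>j v w. j \<noteq> 0 \<Longrightarrow> (\<Sum>u\<le>j. (M u *v w) \<bullet> (M (j - u) *v v)) = 0"
    and "\<And>i m. i \<le> k \<Longrightarrow> m \<in> {1..n} \<Longrightarrow> taylor_coeff_vec i (\<lambda>t. P t m) = M i *v P 0 m + \<beta> i"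
proof -
  obtain \<rho> A b where \<rho>: "\<rho> > 0" and A_analytic: "\<And>a c. analytic_on_radius \<rho> (\<lambda>t. A t $ a $ c)"
    and b_analytic: "\<And>j. analytic_on_radius \<rho> (\<lambda>t. b t $ j)"
    and A_orth: "\<And>t. \<bar>t\<bar> < \<rho> \<Longrightarrow> orthogonal_matrix (A t)" and "A 0 = mat 1"
    and trivial: "\<And>i m j. i \<le> k \<Longrightarrow> m \<in> {1..n} \<Longrightarrow>
        taylor_coeff i (\<lambda>t. P t m $ j) = taylor_coeff i (\<lambda>t. (A t *v P 0 m + b t) $ j)"
    using assms unfolding k_trivial_def analytic_isom_traj_def by blast
  show ?thesis
  proof (rule that[of "\<lambda>i. taylor_coeff_mat i A" "\<lambda>i. taylor_coeff_vec i b"])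
    show "taylor_coeff_mat 0 A = mat 1"
      using \<open>A 0 = mat 1\<close> by (simp add: taylor_coeff_mat_0)
    show "(\<Sum>u\<le>j. (taylor_coeff_mat u A *v w) \<bullet> (taylor_coeff_mat (j - u) A *v v)) = 0" if "j \<noteq> 0"
      for j v w
      by (rule taylor_coeff_mat_orthogonal[OF \<rho> A_analytic A_orth that])
    fix i m assume "i \<le> k" "m \<in> {1..n}"
    then have "taylor_coeff_vec i (\<lambda>t. P t m) = taylor_coeff_vec i (\<lambda>t. A t *v P 0 m + b t)"
      unfolding taylor_coeff_vec_def using trivial by simp
    then show "taylor_coeff_vec i (\<lambda>t. P t m) = taylor_coeff_mat i A *v P 0 m + taylor_coeff_vec i b"
      using taylor_coeff_vec_affine[OF \<rho> A_analytic b_analytic] by simp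
  qed
qed

theorem lemmaA9:
  fixes idx :: "nat \<Rightarrow> 'd::finite" and n l k :: nat and r :: real
    and P :: "real \<Rightarrow> nat \<Rightarrow> real ^ 'd"
  assumes "bij_betw idx {1..CARD('d)} (UNIV :: 'd set)"
    and "pinned_config idx n l (P 0)"
    and "k \<ge> 1"
    and "analytic_traj r n P"
    and "\<forall>t. \<bar>t\<bar> < r \<longrightarrow> pinned_position idx l (P t)"
    and "k_trivial k n P"
  shows "k_vanishing k n P"
proof -
  let ?e = "std_basis idx" and ?Q = "\<lambda>i m. taylor_coeff_vec i (\<lambda>t. P t m)"
  have l_n: "l + 1 \<le> n"
    using assms(2) by (simp add: pinned_config_def)
  obtain M \<beta> where M0: "M 0 = mat 1"
    and orth_series: "\<And>j v w. j \<noteq> 0 \<Longrightarrow> (\<Sum>u\<le>j. (M u *v w) \<bullet> (M (j - u) *v v)) = 0"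
    and coeff: "\<And>i m. i \<le> k \<Longrightarrow> m \<in> {1..n} \<Longrightarrow> ?Q i m = M i *v P 0 m + \<beta> i"
    using k_trivialE[OF assms(6)] by blast
  have Q_pinned: "pinned_position idx l (?Q i)" for i
    by (rule pinned_position_taylor_coeff_vec[OF assms(4) l_n assms(5)])
  have \<beta>: "\<beta> i = 0" if "i \<le> k" for i
    using coeff[OF that, of 1] Q_pinned[of i] assms(2) l_n by (simp add: pinned_config_def pinned_position_def)
  have upper: "M j *v ?e a \<in> span (?e ` {1..a})" if "j \<in> {1..k}" "a \<in> {1..l}" for j a
  proof (rule pinned_config_linear_upper_triangular[OF assms(2) matrix_vector_mul_linear _ that(2)])
    show "pinned_position idx l (\<lambda>m. M j *v P 0 m)"
      using Q_pinned[of j] coeff[of j] \<beta>[of j] that l_n by (auto simp: pinned_position_def)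
  qed
  have basis_orth: "orthogonal (?e a) (?e b)" if "a \<in> {1..l}" "b \<in> {1..l}" "a \<noteq> b" for a b
    using orthogonal_std_basis[OF bij_betw_imp_inj_on[OF assms(1)]] pinned_config_le_card[OF assms(2)] that
    by auto
  have "?Q i m = 0" if "i \<in> {1..k}" "m \<in> {1..n}" for i m
    using orthogonal_series_triangular_coeffs_vanish[where l = l and k = k, OF M0 orth_series basis_orth upper]
      pinned_config_in_span[OF assms(2)] coeff[of i m] \<beta>[of i] that by auto
  then show ?thesis
    by (auto simp: k_vanishing_def taylor_coeff_vec_def taylor_coeff_def vec_eq_iff)
qed

end
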